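(* Let $m\le k\le n$ be positive integers, $\mathbf a_1,\dots,\mathbf a_n\in\mathbb R^m$. For a multiset $\mathcal R$ with support in $[n]$ let $f(\mathcal R)=[\det(\sum_{i\in\mathcal R}\mathbf a_i\mathbf a_i^\top)]^{1/m}$ (sum with multiplicity), and let $w^*=\max\{[\det(\sum_{i\in[n]}x_i\mathbf a_i\mathbf a_i^\top)]^{1/m}:\sum_ix_i=k,\ \mathbf x\in\mathbb Z_+^n\}$ be the optimal value of the $D$-optimal design problem with repetitions. Let $\hat{\mathbf x}\in\mathbb Q_+^n$ be a rational optimal solution of the relaxation $\max\{[\det(\sum_{i\in[n]}x_i\mathbf a_i\mathbf a_i^\top)]^{1/m}:\sum_ix_i=k,\ \mathbf x\in\mathbb R_+^n\}$. Let $\mathcal S$ be the random multiset obtained by $k$ independent draws from $[n]$, each equal to $i$ with probability $\hat x_i/k$. Let $q$ be a positive integer with $q\hat x_i\in\mathbb Z_+$ for all $i$, let $\mathcal A_q$ be a collection of $qk$ distinct items of which exactly $q\hat x_i$ carry label $i$, choose a uniformly random $k$-element subset of $\mathcal A_q$, and let $\mathcal S_q$ be the multiset of labels of the chosen items. Then $$\big(\mathbb E[(f(\mathcal S_q))^m]\big)^{1/m}\ge\big(\mathbb E[(f(\mathcal S))^m]\big)^{1/m}\ge g(m,k)^{-1}w^*,$$ where $$g(m,k)=\Big[\frac{(k-m)!\,k^m}{k!}\Big]^{1/m}\le\min\Big\{e,\ \frac{k}{k-m+1}\Big\}.$$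
   Context: $[n]=\{1,\dots,n\}$, $\mathbb Q_+$ the nonnegative rationals, $\mathbb Z_+$ the nonnegative integers, $\mathbb R_+$ the nonnegative reals. *)

theory Defs
  imports "HOL-Analysis.Analysis" "HOL-Library.Multiset"
begin

definition outer :: "real^'m \<Rightarrow> real^'m^'m" where
  "outer v = (\<chi> i j. v$i * v$j)"

definition fval :: "(nat \<Rightarrow> real^'m) \<Rightarrow> nat multiset \<Rightarrow> real" where
  "fval a R = det (\<Sum>i\<in>#R. outer (a i)) powr (1 / real CARD('m))"

definition obj :: "(nat \<Rightarrow> real^'m) \<Rightarrow> nat \<Rightarrow> (nat \<Rightarrow> real) \<Rightarrow> real" where
  "obj a n x = det (\<Sum>i=1..n. x i *\<^sub>R outer (a i)) powr (1 / real CARD('m))"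

definition wstar :: "(nat \<Rightarrow> real^'m) \<Rightarrow> nat \<Rightarrow> nat \<Rightarrow> real" where
  "wstar a n k = Max {obj a n (\<lambda>i. real (x i)) | x :: nat \<Rightarrow> nat.
       (\<forall>i. i \<notin> {1..n} \<longrightarrow> x i = 0) \<and> (\<Sum>i=1..n. x i) = k}"

definition gmk :: "nat \<Rightarrow> nat \<Rightarrow> real" where
  "gmk m k = (fact (k - m) * real k ^ m / fact k) powr (1 / real m)"

text \<open>E[f(S)^m] where S is the multiset of k independent draws from [n],
  each draw equal to i with probability xh i / k.  Outcomes are the sequences
  s : {0..<k} -> {1..n}.\<close>
definition E_iid :: "(nat \<Rightarrow> real^'m) \<Rightarrow> nat \<Rightarrow> nat \<Rightarrow> (nat \<Rightarrow> real) \<Rightarrow> real" where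
  "E_iid a n k xh = (\<Sum>s \<in> {0..<k} \<rightarrow>\<^sub>E {1..n}.
       (\<Prod>j<k. xh (s j) / real k) * fval a (image_mset s (mset_set {0..<k})) ^ CARD('m))"

definition E_sub :: "(nat \<Rightarrow> real^'m) \<Rightarrow> nat \<Rightarrow> 'b set \<Rightarrow> ('b \<Rightarrow> nat) \<Rightarrow> real" where
  "E_sub a k A lab = (\<Sum>T \<in> {T. T \<subseteq> A \<and> card T = k}.
       fval a (image_mset lab (mset_set T)) ^ CARD('m)) / real (card A choose k)"

end

theory Submission
  imports Defs
begin

(* Expanding det (\<Sum>j. v j v j^T) multilinearly in its rows writes f(R)^m as a sum over the
   injective choices of m elements of R of a term depending only on their labels; non-injective
   choices vanish because two rows coincide.  For the i.i.d. sample every injective choice of m of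
   the k draws has the product law \<Prod>r. xh (\<psi> r) / k, and for the random k-subset of A_q each
   m-subset of A_q is contained in the same number of k-subsets.  Hence both expectations are
   multiples of det (\<Sum>i. xh i a_i a_i^T) = w(xh)^m \<ge> wstar^m, with factors (k)_m / k^m = g(m,k)^(-m)
   and binom(qk-m, k-m) q^m / binom(qk, k) \<ge> (k)_m / k^m.  Finally g \<le> k/(k-m+1) factor by factor,
   and g \<le> e because the geometric mean of the increasing ratios k/(k-j) over j < m is at most
   their geometric mean over j < k, which is (k^k/k!)^(1/k) \<le> e. *)

lemma det_rows_sum_PiE_on:
  fixes a :: "'n::finite \<Rightarrow> 'j \<Rightarrow> 'a::comm_ring_1^'n"
  assumes "finite S"
  shows "det ((\<chi> i. if i \<in> T then sum (a i) S else c i) :: 'a^'n^'n) =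
    (\<Sum>f\<in>T \<rightarrow>\<^sub>E S. det ((\<chi> i. if i \<in> T then a i (f i) else c i) :: 'a^'n^'n))"
  using finite[of T]
proof (induction T arbitrary: c rule: finite_induct)
  case empty
  then show ?case by simp
next
  case (insert z T c)
  have "det ((\<chi> i. if i \<in> insert z T then sum (a i) S else c i) :: 'a^'n^'n) =
     (\<Sum>j\<in>S. det ((\<chi> i. if i \<in> T then sum (a i) S else if i = z then a i j else c i) :: 'a^'n^'n))"
    using det_linear_row_sum[OF assms, of z a "\<lambda>i. if i \<in> T then sum (a i) S else c i"] insert(2)
    by (smt (verit, best) Cart_lambda_cong insert_iff sum.cong)
  also have "\<dots> = (\<Sum>(j, f)\<in>S \<times> (T \<rightarrow>\<^sub>E S).
      det ((\<chi> i. if i \<in> T then a i (f i) else if i = z then a i j else c i) :: 'a^'n^'n))"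
    by (simp add: insert.IH sum.cartesian_product)
  also have "\<dots> = (\<Sum>f\<in>insert z T \<rightarrow>\<^sub>E S. det ((\<chi> i. if i \<in> insert z T then a i (f i) else c i) :: 'a^'n^'n))"
    unfolding PiE_insert_eq using insert(2)
    by (subst sum.reindex[OF inj_combinator[OF insert(2)]])
      (auto intro!: sum.cong arg_cong[where f = det] simp: vec_eq_iff)
  finally show ?case .
qed

lemma det_rows_sum_PiE:
  fixes a :: "'n::finite \<Rightarrow> 'j \<Rightarrow> 'a::comm_ring_1^'n"
  assumes "finite S"
  shows "det ((\<chi> i. sum (a i) S) :: 'a^'n^'n) = (\<Sum>f\<in>UNIV \<rightarrow>\<^sub>E S. det ((\<chi> i. a i (f i)) :: 'a^'n^'n))"
  using det_rows_sum_PiE_on[OF assms, of UNIV a] by simp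

lemma det_nonzero_if_pos_definite:
  fixes M :: "real^'n^'n"
  assumes "\<And>x. x \<noteq> 0 \<Longrightarrow> 0 < x \<bullet> (M *v x)"
  shows "det M \<noteq> 0"
proof -
  have "inj ((*v) M)"
    unfolding linear_injective_0[OF matrix_vector_mul_linear] using assms by force
  then show ?thesis
    using det_nz_iff_inj[OF matrix_vector_mul_linear[of M]] by simp
qed

(* On the segment s M + (1 - s) I, 0 \<le> s < 1, every matrix is positive definite, hence nonsingular,
   so the determinant cannot change sign between det I = 1 and det M. *)
lemma det_nonneg_if_pos_semidefinite:
  fixes M :: "real^'n^'n"
  assumes psd: "\<And>x. 0 \<le> x \<bullet> (M *v x)"
  shows "0 \<le> det M"
proof (rule ccontr)
  define h where "h s = det (s *\<^sub>R M + (1 - s) *\<^sub>R mat 1)" for s :: real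
  assume "\<not> 0 \<le> det M"
  then have "h 1 \<le> 0" by (simp add: h_def)
  moreover have "continuous_on {0..1} h"
    unfolding h_def det_def by (intro continuous_intros)
  ultimately obtain s where s: "0 \<le> s" "s \<le> 1" "h s = 0"
    using IVT2'[of h 1 0 0] by (auto simp: h_def)
  with \<open>\<not> 0 \<le> det M\<close> have "s < 1" by (cases "s = 1") (auto simp: h_def)
  have "0 < x \<bullet> ((s *\<^sub>R M + (1 - s) *\<^sub>R mat 1) *v x)" if "x \<noteq> 0" for x
  proof -
    have "x \<bullet> ((s *\<^sub>R M + (1 - s) *\<^sub>R mat 1) *v x) = s * (x \<bullet> (M *v x)) + (1 - s) * (x \<bullet> x)"
      by (simp add: matrix_vector_mult_add_rdistrib scaleR_matrix_vector_assoc[symmetric] inner_add_right)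
    moreover have "0 < (1 - s) * (x \<bullet> x)"
      using \<open>s < 1\<close> that by simp
    ultimately show ?thesis
      using psd[of x] s(1) by (simp add: add_nonneg_pos)
  qed
  then have "h s \<noteq> 0"
    unfolding h_def by (rule det_nonzero_if_pos_definite)
  with s show False by simp
qed

lemma outer_mult_vec: "outer v *v x = (v \<bullet> x) *\<^sub>R v"
  by (simp add: vec_eq_iff outer_def matrix_vector_mult_def inner_vec_def sum_distrib_left algebra_simps)

lemma quadratic_form_sum_outer:
  "x \<bullet> ((\<Sum>j\<in>J. c j *\<^sub>R outer (v j)) *v x) = (\<Sum>j\<in>J. c j * (v j \<bullet> x)\<^sup>2)"
proof -
  have "(\<Sum>j\<in>J. c j *\<^sub>R outer (v j)) *v x = (\<Sum>j\<in>J. (c j * (v j \<bullet> x)) *\<^sub>R v j)"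
    by (induction J rule: infinite_finite_induct)
      (simp_all add: matrix_vector_mult_add_rdistrib scaleR_matrix_vector_assoc[symmetric] outer_mult_vec)
  then show ?thesis
    by (simp add: inner_sum_right power2_eq_square inner_commute mult.assoc)
qed

lemma det_sum_outer_nonneg:
  assumes "\<And>j. j \<in> J \<Longrightarrow> 0 \<le> c j"
  shows "0 \<le> det (\<Sum>j\<in>J. c j *\<^sub>R outer (v j :: real^'m))"
  by (rule det_nonneg_if_pos_semidefinite)
    (use assms in \<open>auto simp: quadratic_form_sum_outer intro!: sum_nonneg\<close>)

(* Row r of \<Sum>j. c j *\<^sub>R outer (v j) is \<Sum>j. (c j * v j $ r) *s v j; choosing the summand
   \<phi> r in every row r contributes (\<Prod>r. c (\<phi> r)) * outer_det_term (v \<circ> \<phi>). *)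
definition outer_det_term :: "('m::finite \<Rightarrow> real^'m) \<Rightarrow> real" where
  "outer_det_term w = (\<Prod>r\<in>UNIV. w r $ r) * det (\<chi> r. w r)"

lemma outer_det_term_not_inj:
  assumes "\<not> inj \<phi>"
  shows "outer_det_term (v \<circ> \<phi>) = 0"
proof -
  from assms obtain i j where "i \<noteq> j" "\<phi> i = \<phi> j"
    unfolding inj_def by blast
  then have "det (\<chi> r. (v \<circ> \<phi>) r) = 0"
    by (intro det_identical_rows[of i j]) (auto simp: row_def vec_eq_iff)
  then show ?thesis
    by (simp add: outer_det_term_def)
qed

lemma det_sum_scaled_outer:
  fixes v :: "'j \<Rightarrow> real^'m"
  assumes "finite J"
  shows "det (\<Sum>j\<in>J. c j *\<^sub>R outer (v j)) =
    (\<Sum>\<phi>\<in>UNIV \<rightarrow>\<^sub>E J. (\<Prod>r\<in>UNIV. c (\<phi> r)) * outer_det_term (v \<circ> \<phi>))"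
proof -
  have "(\<Sum>j\<in>J. c j *\<^sub>R outer (v j)) = (\<chi> r. \<Sum>j\<in>J. (c j * v j $ r) *s v j)"
    by (simp add: vec_eq_iff sum_component outer_def algebra_simps)
  then show ?thesis
    using det_rows_sum_PiE[OF assms, of "\<lambda>r j. (c j * v j $ r) *s v j"]
    by (simp add: det_rows_mul outer_det_term_def prod.distrib mult.assoc)
qed

lemma sum_PiE_inj_eq:
  fixes g :: "('m::finite \<Rightarrow> 'j) \<Rightarrow> 'a::comm_monoid_add"
  assumes "finite J" and "\<And>\<phi>. \<not> inj \<phi> \<Longrightarrow> g \<phi> = 0"
  shows "(\<Sum>\<phi>\<in>UNIV \<rightarrow>\<^sub>E J. g \<phi>) = (\<Sum>\<phi>\<in>{\<phi> \<in> UNIV \<rightarrow>\<^sub>E J. inj \<phi>}. g \<phi>)"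
  using assms by (intro sum.mono_neutral_right) (auto intro: finite_PiE)

lemma det_sum_outer_inj:
  fixes v :: "'j \<Rightarrow> real^'m"
  assumes "finite J"
  shows "det (\<Sum>j\<in>J. outer (v j)) = (\<Sum>\<phi>\<in>{\<phi> \<in> UNIV \<rightarrow>\<^sub>E J. inj \<phi>}. outer_det_term (v \<circ> \<phi>))"
  using det_sum_scaled_outer[OF assms, of "\<lambda>_. 1" v]
  by (simp add: sum_PiE_inj_eq[OF assms] outer_det_term_not_inj)

lemma fval_pow_card:
  assumes "finite J"
  shows "fval a (image_mset s (mset_set J)) ^ CARD('m) = det (\<Sum>j\<in>J. outer (a (s j) :: real^'m))"
proof -
  have "0 \<le> det (\<Sum>j\<in>J. 1 *\<^sub>R outer (a (s j) :: real^'m))"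
    by (rule det_sum_outer_nonneg) simp
  then show ?thesis
    by (simp add: fval_def sum_unfold_sum_mset image_mset.compositionality o_def
        flip: root_powr_inverse)
qed

definition info_matrix :: "(nat \<Rightarrow> real^'m) \<Rightarrow> nat \<Rightarrow> (nat \<Rightarrow> real) \<Rightarrow> real^'m^'m" where
  "info_matrix a n x = (\<Sum>i=1..n. x i *\<^sub>R outer (a i))"

lemma det_info_matrix_expand:
  "det (info_matrix a n x) =
    (\<Sum>\<psi>\<in>UNIV \<rightarrow>\<^sub>E {1..n}. (\<Prod>r\<in>UNIV. x (\<psi> r)) * outer_det_term (a \<circ> \<psi>))"
  unfolding info_matrix_def by (rule det_sum_scaled_outer) simp

(* (k)_m / k^m, the probability that m independent uniform draws from k items are distinct. *)
definition distinct_prob :: "nat \<Rightarrow> nat \<Rightarrow> real" where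
  "distinct_prob k m = (\<Prod>j<m. real k - real j) / real k ^ m"

lemma distinct_prob_nonneg: "m \<le> k \<Longrightarrow> 0 \<le> distinct_prob k m"
  unfolding distinct_prob_def by (auto intro!: divide_nonneg_nonneg prod_nonneg)

lemma PiE_fiber_compose_inj:
  assumes "inj \<phi>" "range \<phi> \<subseteq> I" "\<psi> \<in> UNIV \<rightarrow>\<^sub>E B"
  shows "{s \<in> I \<rightarrow>\<^sub>E B. s \<circ> \<phi> = \<psi>} =
    Pi\<^sub>E I (\<lambda>j. if j \<in> range \<phi> then {\<psi> (inv \<phi> j)} else B)" (is "?L = ?R")
proof
  show "?L \<subseteq> ?R"
    using assms by (auto simp: fun_eq_iff)
  show "?R \<subseteq> ?L"
  proof
    fix s assume s: "s \<in> ?R"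
    have "s (\<phi> r) = \<psi> r" for r
      using PiE_mem[OF s, of "\<phi> r"] assms by auto
    moreover have "s \<in> I \<rightarrow>\<^sub>E B"
      using s assms(3) by (auto simp: PiE_iff split: if_splits)
    ultimately show "s \<in> ?L" by auto
  qed
qed

lemma sum_PiE_fiber_prod:
  fixes w :: "'b \<Rightarrow> real"
  assumes "finite I" "finite B" "sum w B = 1" "inj \<phi>" "range \<phi> \<subseteq> I" "\<psi> \<in> UNIV \<rightarrow>\<^sub>E B"
  shows "(\<Sum>s\<in>{s \<in> I \<rightarrow>\<^sub>E B. s \<circ> \<phi> = \<psi>}. \<Prod>j\<in>I. w (s j)) = (\<Prod>r\<in>UNIV. w (\<psi> r))"
proof -
  have "(\<Sum>s\<in>{s \<in> I \<rightarrow>\<^sub>E B. s \<circ> \<phi> = \<psi>}. \<Prod>j\<in>I. w (s j)) =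
      (\<Prod>j\<in>I. \<Sum>b\<in>(if j \<in> range \<phi> then {\<psi> (inv \<phi> j)} else B). w b)"
    unfolding PiE_fiber_compose_inj[OF assms(4-6)] using assms(1,2)
    by (subst prod_sum_PiE) auto
  also have "\<dots> = (\<Prod>j\<in>I. if j \<in> range \<phi> then w (\<psi> (inv \<phi> j)) else 1)"
    using assms(3) by (intro prod.cong) auto
  also have "\<dots> = (\<Prod>j\<in>range \<phi>. w (\<psi> (inv \<phi> j)))"
    using assms(1,5) by (simp add: prod.If_cases Int_absorb1 Int_absorb2)
  also have "\<dots> = (\<Prod>r\<in>UNIV. w (\<psi> r))"
    using assms(4) by (simp add: prod.reindex)
  finally show ?thesis .
qed

lemma sum_PiE_prod_marginal:
  fixes w :: "'b \<Rightarrow> real" and \<phi> :: "'m::finite \<Rightarrow> 'i"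
  assumes "finite I" "finite B" "sum w B = 1" "inj \<phi>" "range \<phi> \<subseteq> I"
  shows "(\<Sum>s\<in>I \<rightarrow>\<^sub>E B. (\<Prod>j\<in>I. w (s j)) * G (s \<circ> \<phi>)) =
    (\<Sum>\<psi>\<in>UNIV \<rightarrow>\<^sub>E B. (\<Prod>r\<in>UNIV. w (\<psi> r)) * G \<psi>)"
proof -
  have "(\<Sum>s\<in>I \<rightarrow>\<^sub>E B. (\<Prod>j\<in>I. w (s j)) * G (s \<circ> \<phi>)) =
      (\<Sum>\<psi>\<in>UNIV \<rightarrow>\<^sub>E B. \<Sum>s\<in>{s \<in> I \<rightarrow>\<^sub>E B. s \<circ> \<phi> = \<psi>}. (\<Prod>j\<in>I. w (s j)) * G (s \<circ> \<phi>))"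
    using assms(1,2,5) by (intro sum.group[symmetric]) (auto intro: finite_PiE simp: PiE_iff subset_iff)
  also have "\<dots> = (\<Sum>\<psi>\<in>UNIV \<rightarrow>\<^sub>E B. (\<Sum>s\<in>{s \<in> I \<rightarrow>\<^sub>E B. s \<circ> \<phi> = \<psi>}. \<Prod>j\<in>I. w (s j)) * G \<psi>)"
    by (simp add: sum_distrib_right)
  also have "\<dots> = (\<Sum>\<psi>\<in>UNIV \<rightarrow>\<^sub>E B. (\<Prod>r\<in>UNIV. w (\<psi> r)) * G \<psi>)"
    using sum_PiE_fiber_prod[OF assms] by simp
  finally show ?thesis .
qed

lemma card_inj_PiE:
  assumes "finite B"
  shows "card {\<phi> \<in> (UNIV :: 'm::finite set) \<rightarrow>\<^sub>E B. inj \<phi>} = (\<Prod>j<CARD('m). card B - j)"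
  using card_inj_on_subset_funcset[OF finite[of "UNIV :: 'm set"] assms, of UNIV] by (simp add: atLeast0LessThan)

lemma of_nat_falling_prod:
  "m \<le> k \<Longrightarrow> real (\<Prod>j<m. k - j) = (\<Prod>j<m. real k - real j)"
  by (simp add: of_nat_diff)

lemma E_iid_eq:
  fixes a :: "nat \<Rightarrow> real^'m"
  assumes "CARD('m) \<le> k" and xh_sum: "(\<Sum>i=1..n. xh i) = real k"
  shows "E_iid a n k xh = distinct_prob k CARD('m) * det (info_matrix a n xh)"
proof -
  let ?S = "{0..<k} \<rightarrow>\<^sub>E {1..n}" and ?Inj = "{\<phi> \<in> (UNIV :: 'm set) \<rightarrow>\<^sub>E {0..<k}. inj \<phi>}"
  define w where "w i = xh i / real k" for i
  have "0 < k"
    using assms(1) less_le_trans[of 0 "CARD('m)" k] by simp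
  then have w_sum: "sum w {1..n} = 1"
    using xh_sum by (simp add: w_def flip: sum_divide_distrib)
  have marginal: "(\<Sum>s\<in>?S. (\<Prod>j\<in>{0..<k}. w (s j)) * outer_det_term (a \<circ> (s \<circ> \<phi>))) =
      det (info_matrix a n xh) / real k ^ CARD('m)" if "\<phi> \<in> ?Inj" for \<phi>
  proof -
    have "(\<Sum>s\<in>?S. (\<Prod>j\<in>{0..<k}. w (s j)) * outer_det_term (a \<circ> (s \<circ> \<phi>))) =
        (\<Sum>\<psi>\<in>UNIV \<rightarrow>\<^sub>E {1..n}. (\<Prod>r\<in>UNIV. w (\<psi> r)) * outer_det_term (a \<circ> \<psi>))"
      using that by (intro sum_PiE_prod_marginal[OF _ _ w_sum]) auto
    also have "\<dots> = det (info_matrix a n xh) / real k ^ CARD('m)"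
      by (simp add: det_info_matrix_expand w_def prod_dividef sum_divide_distrib)
    finally show ?thesis .
  qed
  have "E_iid a n k xh = (\<Sum>s\<in>?S. (\<Prod>j\<in>{0..<k}. w (s j)) * det (\<Sum>j\<in>{0..<k}. outer (a (s j))))"
    unfolding E_iid_def w_def by (simp add: fval_pow_card atLeast0LessThan)
  also have "\<dots> = (\<Sum>\<phi>\<in>?Inj. \<Sum>s\<in>?S. (\<Prod>j\<in>{0..<k}. w (s j)) * outer_det_term (a \<circ> (s \<circ> \<phi>)))"
    by (simp add: det_sum_outer_inj sum_distrib_left sum.swap[of _ ?Inj] comp_def)
  also have "\<dots> = (\<Sum>\<phi>\<in>?Inj. det (info_matrix a n xh) / real k ^ CARD('m))"
    by (rule sum.cong[OF refl marginal])
  also have "\<dots> = real (card ?Inj) * (det (info_matrix a n xh) / real k ^ CARD('m))"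
    by simp
  also have "\<dots> = distinct_prob k CARD('m) * det (info_matrix a n xh)"
    using assms(1) by (simp add: card_inj_PiE of_nat_falling_prod distinct_prob_def)
  finally show ?thesis .
qed

lemma det_scaleR: "det (c *\<^sub>R M) = c ^ CARD('n) * det (M :: real^'n::finite^'n)"
proof -
  have "c *\<^sub>R M = (\<chi> i. c *s M $ i)"
    by (simp add: vec_eq_iff)
  then show ?thesis
    by (simp add: det_rows_mul)
qed

lemma card_supersets_card:
  assumes "finite A" "R \<subseteq> A" "card R \<le> k"
  shows "card {T. T \<subseteq> A \<and> card T = k \<and> R \<subseteq> T} = (card A - card R) choose (k - card R)"
proof -
  have "finite R"
    using assms finite_subset by blast
  have "bij_betw (\<lambda>U. U \<union> R) {U. U \<subseteq> A - R \<and> card U = k - card R} {T. T \<subseteq> A \<and> card T = k \<and> R \<subseteq> T}"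
  proof (rule bij_betw_byWitness[where f' = "\<lambda>T. T - R"])
    show "(\<lambda>U. U \<union> R) ` {U. U \<subseteq> A - R \<and> card U = k - card R} \<subseteq> {T. T \<subseteq> A \<and> card T = k \<and> R \<subseteq> T}"
    proof clarify
      fix U assume U: "U \<subseteq> A - R" "card U = k - card R"
      then have "finite U" "U \<inter> R = {}"
        using assms(1) finite_subset by auto
      then show "U \<union> R \<subseteq> A \<and> card (U \<union> R) = k \<and> R \<subseteq> U \<union> R"
        using U assms \<open>finite R\<close> by (auto simp: card_Un_disjoint)
    qed
    show "(\<lambda>T. T - R) ` {T. T \<subseteq> A \<and> card T = k \<and> R \<subseteq> T} \<subseteq> {U. U \<subseteq> A - R \<and> card U = k - card R}"
      using \<open>finite R\<close> by (auto simp: card_Diff_subset)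
  qed auto
  then show ?thesis
    using n_subsets[of "A - R" "k - card R"] assms \<open>finite R\<close>
    by (simp add: bij_betw_same_card[symmetric] card_Diff_subset)
qed

lemma sum_subsets_det_sum_outer:
  fixes v :: "'b \<Rightarrow> real^'m"
  assumes "finite A" "CARD('m) \<le> k"
  shows "(\<Sum>T\<in>{T. T \<subseteq> A \<and> card T = k}. det (\<Sum>t\<in>T. outer (v t))) =
    real ((card A - CARD('m)) choose (k - CARD('m))) * det (\<Sum>t\<in>A. outer (v t))"
proof -
  let ?Sub = "{T. T \<subseteq> A \<and> card T = k}" and ?Inj = "{\<phi> \<in> (UNIV :: 'm set) \<rightarrow>\<^sub>E A. inj \<phi>}"
  have "finite ?Sub" "finite ?Inj"
    using assms(1) by (simp_all add: finite_Collect_subsets finite_PiE)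
  have "(\<Sum>T\<in>?Sub. det (\<Sum>t\<in>T. outer (v t))) =
      (\<Sum>T\<in>?Sub. \<Sum>\<phi>\<in>{\<phi> \<in> ?Inj. range \<phi> \<subseteq> T}. outer_det_term (v \<circ> \<phi>))"
    using assms(1)
    by (intro sum.cong refl, subst det_sum_outer_inj)
      (auto intro: finite_subset intro!: sum.cong simp: PiE_UNIV_domain)
  also have "\<dots> = (\<Sum>\<phi>\<in>?Inj. \<Sum>T\<in>{T \<in> ?Sub. range \<phi> \<subseteq> T}. outer_det_term (v \<circ> \<phi>))"
    using \<open>finite ?Sub\<close> \<open>finite ?Inj\<close> by (rule sum.swap_restrict)
  also have "\<dots> = (\<Sum>\<phi>\<in>?Inj. real ((card A - CARD('m)) choose (k - CARD('m))) * outer_det_term (v \<circ> \<phi>))"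
  proof (intro sum.cong refl)
    fix \<phi> assume "\<phi> \<in> ?Inj"
    then have "card (range \<phi>) = CARD('m)" "range \<phi> \<subseteq> A"
      by (auto simp: card_image)
    then show "(\<Sum>T\<in>{T \<in> ?Sub. range \<phi> \<subseteq> T}. outer_det_term (v \<circ> \<phi>)) =
        real ((card A - CARD('m)) choose (k - CARD('m))) * outer_det_term (v \<circ> \<phi>)"
      using card_supersets_card[OF assms(1), of "range \<phi>" k] assms(2) by (simp add: conj_assoc)
  qed
  also have "\<dots> = real ((card A - CARD('m)) choose (k - CARD('m))) * det (\<Sum>t\<in>A. outer (v t))"
    by (simp add: det_sum_outer_inj[OF assms(1)] sum_distrib_left)
  finally show ?thesis .
qed

lemma sum_outer_labels:
  assumes "finite A" "\<forall>x\<in>A. lab x \<in> {1..n}"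
    and "\<forall>i\<in>{1..n}. real (card {x\<in>A. lab x = i}) = real q * xh i"
  shows "(\<Sum>t\<in>A. outer (a (lab t))) = real q *\<^sub>R info_matrix a n xh"
proof -
  have "(\<Sum>t\<in>A. outer (a (lab t))) = (\<Sum>i\<in>{1..n}. \<Sum>t\<in>{x\<in>A. lab x = i}. outer (a (lab t)))"
    using assms(1,2) by (intro sum.group[symmetric]) auto
  also have "\<dots> = (\<Sum>i\<in>{1..n}. real (card {x\<in>A. lab x = i}) *\<^sub>R outer (a i))"
    by (intro sum.cong refl) (simp add: scaleR_conv_of_real)
  also have "\<dots> = real q *\<^sub>R info_matrix a n xh"
    using assms(3) by (simp add: info_matrix_def scaleR_sum_right)
  finally show ?thesis .
qed

lemma E_sub_eq:
  fixes a :: "nat \<Rightarrow> real^'m"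
  assumes "finite A" "CARD('m) \<le> k" "\<forall>x\<in>A. lab x \<in> {1..n}"
    and "\<forall>i\<in>{1..n}. real (card {x\<in>A. lab x = i}) = real q * xh i"
  shows "E_sub a k A lab = real ((card A - CARD('m)) choose (k - CARD('m))) / real (card A choose k)
      * real q ^ CARD('m) * det (info_matrix a n xh)"
proof -
  have "(\<Sum>T\<in>{T. T \<subseteq> A \<and> card T = k}. fval a (image_mset lab (mset_set T)) ^ CARD('m)) =
      (\<Sum>T\<in>{T. T \<subseteq> A \<and> card T = k}. det (\<Sum>t\<in>T. outer (a (lab t))))"
    using assms(1) by (intro sum.cong refl) (auto simp: fval_pow_card finite_subset)
  also have "\<dots> = real ((card A - CARD('m)) choose (k - CARD('m))) * det (\<Sum>t\<in>A. outer (a (lab t)))"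
    using assms(1,2) by (rule sum_subsets_det_sum_outer)
  also have "\<dots> = real ((card A - CARD('m)) choose (k - CARD('m))) * real q ^ CARD('m) * det (info_matrix a n xh)"
    by (simp add: sum_outer_labels[OF assms(1,3,4)] det_scaleR)
  finally show ?thesis
    by (simp add: E_sub_def)
qed

lemma fact_eq_fact_diff_mult_prod:
  "m \<le> k \<Longrightarrow> (fact k :: real) = fact (k - m) * (\<Prod>j<m. real k - real j)"
proof (induction m)
  case (Suc m)
  then have "(fact (k - m) :: real) = (real k - real m) * fact (k - Suc m)"
    by (simp add: fact_reduce of_nat_diff)
  with Suc show ?case
    by (simp add: algebra_simps)
qed simp

lemma choose_ratio_eq:
  assumes "m \<le> k" "k \<le> N"
  shows "real ((N - m) choose (k - m)) / real (N choose k) =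
    (\<Prod>j<m. real k - real j) / (\<Prod>j<m. real N - real j)"
proof -
  have "(\<Prod>j<m. real N - real j) > 0"
    using assms by (intro prod_pos) auto
  then show ?thesis
    using assms fact_eq_fact_diff_mult_prod[of m k] fact_eq_fact_diff_mult_prod[of m N]
    by (simp add: binomial_fact field_simps)
qed

lemma distinct_prob_le_choose_ratio:
  assumes "0 < q" "m \<le> k"
  shows "distinct_prob k m \<le> real ((q * k - m) choose (k - m)) / real (q * k choose k) * real q ^ m"
proof -
  have "k \<le> q * k"
    using assms(1) by simp
  have below: "real j < real (q * k)" if "j < m" for j
    using that assms(2) \<open>k \<le> q * k\<close> by linarith
  have "0 < (\<Prod>j<m. real (q * k) - real j)"
    using below by (intro prod_pos) (simp del: of_nat_mult)
  moreover have "(\<Prod>j<m. real (q * k) - real j) \<le> (\<Prod>j<m. real (q * k))"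
    using below by (intro prod_mono) (auto simp del: of_nat_mult intro: less_imp_le)
  moreover have "0 \<le> (\<Prod>j<m. real k - real j) * real q ^ m"
    using assms by (intro mult_nonneg_nonneg prod_nonneg) auto
  ultimately have "(\<Prod>j<m. real k - real j) * real q ^ m / (\<Prod>j<m. real (q * k)) \<le>
      (\<Prod>j<m. real k - real j) * real q ^ m / (\<Prod>j<m. real (q * k) - real j)"
    by (intro frac_le) simp_all
  moreover have "(\<Prod>j<m. real k - real j) * real q ^ m / (\<Prod>j<m. real (q * k)) = distinct_prob k m"
    using assms(1) by (simp add: distinct_prob_def power_mult_distrib)
  ultimately have "distinct_prob k m \<le>
      (\<Prod>j<m. real k - real j) / (\<Prod>j<m. real (q * k) - real j) * real q ^ m"
    by simp
  then show ?thesis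
    using choose_ratio_eq[OF assms(2) \<open>k \<le> q * k\<close>] by simp
qed

lemma pow_div_fact_le_exp:
  fixes x :: real
  assumes "0 \<le> x"
  shows "x ^ n / fact n \<le> exp x"
proof -
  have "(\<Sum>i\<in>{n}. x ^ i /\<^sub>R fact i) \<le> (\<Sum>i. x ^ i /\<^sub>R fact i)"
    using assms by (intro sum_le_suminf summable_exp_generic) auto
  then show ?thesis
    by (simp add: exp_def divide_inverse mult.commute)
qed

lemma prod_lessThan_pow_le_pow:
  fixes r :: "nat \<Rightarrow> real"
  assumes mono: "\<And>i j. j \<le> i \<Longrightarrow> i < k \<Longrightarrow> r j \<le> r i"
    and nonneg: "\<And>j. j < k \<Longrightarrow> 0 \<le> r j" and "m \<le> k"
  shows "(\<Prod>j<m. r j) ^ k \<le> (\<Prod>j<k. r j) ^ m"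
proof (cases "m = k")
  case False
  with \<open>m \<le> k\<close> have "m < k" by simp
  have P_nonneg: "0 \<le> (\<Prod>j<m. r j)"
    using nonneg \<open>m < k\<close> by (intro prod_nonneg) auto
  have "(\<Prod>j<m. r j) ^ (k - m) \<le> (r m ^ m) ^ (k - m)"
    using mono nonneg \<open>m < k\<close> P_nonneg
    by (intro power_mono) (auto intro: prod_mono[of "{..<m}" r "\<lambda>_. r m", simplified])
  also have "\<dots> = (r m ^ (k - m)) ^ m"
    by (simp add: mult.commute flip: power_mult)
  also have "\<dots> \<le> (\<Prod>j\<in>{m..<k}. r j) ^ m"
    using mono nonneg \<open>m < k\<close>
    by (intro power_mono) (auto intro: prod_mono[of "{m..<k}" "\<lambda>_. r m" r, simplified])
  finally have "(\<Prod>j<m. r j) ^ m * (\<Prod>j<m. r j) ^ (k - m) \<le> (\<Prod>j<m. r j) ^ m * (\<Prod>j\<in>{m..<k}. r j) ^ m"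
    using P_nonneg by (simp add: mult_left_mono)
  moreover have "(\<Prod>j<k. r j) = (\<Prod>j<m. r j) * (\<Prod>j\<in>{m..<k}. r j)"
    using \<open>m \<le> k\<close> by (metis atLeast0LessThan prod.atLeastLessThan_concat zero_le)
  ultimately show ?thesis
    using \<open>m \<le> k\<close> by (simp add: power_mult_distrib flip: power_add)
qed simp

lemma inverse_distinct_prob_eq:
  "m \<le> k \<Longrightarrow> inverse (distinct_prob k m) = (\<Prod>j<m. real k / (real k - real j))"
  by (simp add: distinct_prob_def prod_dividef)

lemma gmk_eq_distinct_prob:
  "m \<le> k \<Longrightarrow> gmk m k = inverse (distinct_prob k m) powr (1 / real m)"
  using fact_eq_fact_diff_mult_prod[of m k]
  by (simp add: gmk_def distinct_prob_def)

lemma inverse_distinct_prob_le_ratio: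
  assumes "m \<le> k"
  shows "inverse (distinct_prob k m) \<le> (real k / (real k - real m + 1)) ^ m"
proof -
  have "(\<Prod>j<m. real k / (real k - real j)) \<le> (\<Prod>j<m. real k / (real k - real m + 1))"
  proof (rule prod_mono)
    fix j assume "j \<in> {..<m}"
    with assms show "0 \<le> real k / (real k - real j) \<and> real k / (real k - real j) \<le> real k / (real k - real m + 1)"
      by (auto intro: divide_left_mono)
  qed
  then show ?thesis
    by (simp add: inverse_distinct_prob_eq[OF assms])
qed

lemma inverse_distinct_prob_le_exp:
  assumes "m \<le> k"
  shows "inverse (distinct_prob k m) \<le> exp (real m)"
proof (cases "k = 0")
  case False
  define r where "r j = real k / (real k - real j)" for j
  have "inverse (distinct_prob k m) ^ k \<le> (\<Prod>j<k. r j) ^ m"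
    unfolding inverse_distinct_prob_eq[OF assms] r_def
  proof (rule prod_lessThan_pow_le_pow[OF _ _ assms])
    fix i j assume "j \<le> i" "i < k"
    then show "real k / (real k - real j) \<le> real k / (real k - real i)"
      by (intro frac_le) auto
  qed simp
  also have "(\<Prod>j<k. r j) = real k ^ k / fact k"
    using fact_eq_fact_diff_mult_prod[of k k] by (simp add: r_def prod_dividef)
  also have "(real k ^ k / fact k) ^ m \<le> exp (real k) ^ m"
    by (rule power_mono[OF pow_div_fact_le_exp]) simp_all
  also have "\<dots> = exp (real m) ^ k"
    by (simp add: mult.commute flip: exp_of_nat_mult)
  finally have "inverse (distinct_prob k m) ^ k \<le> exp (real m) ^ k" .
  moreover have "0 \<le> inverse (distinct_prob k m)"
    using distinct_prob_nonneg[OF assms] by simp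
  ultimately show ?thesis
    using False by simp
next
  case True
  with assms show ?thesis
    by (simp add: distinct_prob_def)
qed

lemma gmk_le_min:
  assumes "0 < m" "m \<le> k"
  shows "gmk m k \<le> min (exp 1) (real k / (real k - real m + 1))"
proof -
  have base_nonneg: "0 \<le> inverse (distinct_prob k m)"
    using distinct_prob_nonneg[OF assms(2)] by simp
  have "gmk m k \<le> exp (real m) powr (1 / real m)"
    unfolding gmk_eq_distinct_prob[OF assms(2)]
    by (rule powr_mono2[OF _ base_nonneg inverse_distinct_prob_le_exp[OF assms(2)]]) simp
  also have "\<dots> = exp 1"
    using assms(1) by (simp add: powr_def)
  finally have "gmk m k \<le> exp 1" .
  have "gmk m k \<le> ((real k / (real k - real m + 1)) ^ m) powr (1 / real m)"
    unfolding gmk_eq_distinct_prob[OF assms(2)]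
    by (rule powr_mono2[OF _ base_nonneg inverse_distinct_prob_le_ratio[OF assms(2)]]) simp
  also have "\<dots> = real k / (real k - real m + 1)"
    using assms by (simp add: real_root_power_cancel flip: root_powr_inverse)
  finally show ?thesis
    using \<open>gmk m k \<le> exp 1\<close> by simp
qed

lemma wstar_le_relaxation:
  assumes "1 \<le> n"
    and opt: "\<forall>x :: nat \<Rightarrow> real. (\<forall>i\<in>{1..n}. x i \<ge> 0) \<and> (\<Sum>i=1..n. x i) = real k
                \<longrightarrow> obj a n x \<le> obj a n xh"
  shows "wstar a n k \<le> obj a n xh"
proof -
  define X where "X = {x :: nat \<Rightarrow> nat. (\<forall>i. i \<notin> {1..n} \<longrightarrow> x i = 0) \<and> (\<Sum>i=1..n. x i) = k}"
  have "X \<subseteq> {x. \<forall>i. (i \<in> {1..n} \<longrightarrow> x i \<in> {0..k}) \<and> (i \<notin> {1..n} \<longrightarrow> x i = 0)}"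
  proof (clarify, intro conjI impI)
    fix x i assume "x \<in> X"
    then show "i \<notin> {1..n} \<Longrightarrow> x i = 0" by (simp add: X_def)
    assume "i \<in> {1..n}"
    then have "x i \<le> (\<Sum>i=1..n. x i)"
      by (intro member_le_sum) auto
    with \<open>x \<in> X\<close> show "x i \<in> {0..k}" by (simp add: X_def)
  qed
  then have "finite X"
    by (rule finite_subset) (intro finite_set_of_finite_funs; simp)
  moreover have "X \<noteq> {}"
  proof -
    have "(\<lambda>i. if i = 1 then k else 0) \<in> X"
      using assms(1) by (simp add: X_def)
    then show ?thesis by blast
  qed
  moreover have "obj a n (\<lambda>i. real (x i)) \<le> obj a n xh" if "x \<in> X" for x
    using that opt by (simp add: X_def flip: of_nat_sum)
  moreover have "wstar a n k = Max ((\<lambda>x. obj a n (\<lambda>i. real (x i))) ` X)"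
    unfolding wstar_def X_def by (rule arg_cong[where f = Max]) blast
  ultimately show ?thesis
    by (simp add: Max_le_iff)
qed

theorem proposition4:
  fixes a :: "nat \<Rightarrow> real^'m" and n k q :: nat and xh :: "nat \<Rightarrow> real"
    and A :: "'b set" and lab :: "'b \<Rightarrow> nat"
  assumes mk: "CARD('m) \<le> k" and kn: "k \<le> n"
    and xh_nonneg: "\<forall>i\<in>{1..n}. xh i \<ge> 0"
    and xh_rat: "\<forall>i\<in>{1..n}. xh i \<in> \<rat>"
    and xh_sum: "(\<Sum>i=1..n. xh i) = real k"
    and xh_opt: "\<forall>x :: nat \<Rightarrow> real. (\<forall>i\<in>{1..n}. x i \<ge> 0) \<and> (\<Sum>i=1..n. x i) = real k
                   \<longrightarrow> obj a n x \<le> obj a n xh"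
    and q_pos: "q > 0"
    and q_int: "\<forall>i\<in>{1..n}. \<exists>c::nat. real q * xh i = real c"
    and A_fin: "finite A" and A_card: "card A = q * k"
    and lab_range: "\<forall>x\<in>A. lab x \<in> {1..n}"
    and lab_count: "\<forall>i\<in>{1..n}. real (card {x\<in>A. lab x = i}) = real q * xh i"
  shows "E_sub a k A lab powr (1 / real CARD('m)) \<ge> E_iid a n k xh powr (1 / real CARD('m))
       \<and> E_iid a n k xh powr (1 / real CARD('m)) \<ge> wstar a n k / gmk CARD('m) k
       \<and> gmk CARD('m) k \<le> min (exp 1) (real k / (real k - real CARD('m) + 1))"
proof -
  let ?m = "CARD('m)" and ?D = "det (info_matrix a n xh)"
  have D_nonneg: "0 \<le> ?D"
    unfolding info_matrix_def using xh_nonneg by (intro det_sum_outer_nonneg) auto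
  have E_iid: "E_iid a n k xh = distinct_prob k ?m * ?D"
    by (rule E_iid_eq[OF mk xh_sum])
  have "E_iid a n k xh \<le> E_sub a k A lab"
    unfolding E_iid E_sub_eq[OF A_fin mk lab_range lab_count] A_card
    using distinct_prob_le_choose_ratio[OF q_pos mk] D_nonneg by (rule mult_right_mono)
  then have iid_le_sub: "E_iid a n k xh powr (1 / ?m) \<le> E_sub a k A lab powr (1 / ?m)"
    using distinct_prob_nonneg[OF mk] D_nonneg by (intro powr_mono2) (simp_all add: E_iid)
  have "0 < ?m"
    by simp
  have "wstar a n k \<le> obj a n xh"
    using \<open>0 < ?m\<close> mk kn by (intro wstar_le_relaxation[OF _ xh_opt]) linarith
  then have "wstar a n k / gmk ?m k \<le> obj a n xh * distinct_prob k ?m powr (1 / ?m)"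
    by (simp add: gmk_eq_distinct_prob[OF mk] inverse_powr divide_inverse mult_right_mono)
  also have "\<dots> = E_iid a n k xh powr (1 / ?m)"
    using distinct_prob_nonneg[OF mk] D_nonneg
    by (simp add: E_iid obj_def info_matrix_def powr_mult mult.commute)
  finally show ?thesis
    using iid_le_sub gmk_le_min[OF \<open>0 < ?m\<close> mk] by simp
qed

end
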